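(* There is a universal constant $C$ such that for all positive integers $k,n$, every $\epsilon\in(0,1)$, and every integer $g$, there is a $k$-party, one-round protocol using public randomness for the Sum-Equal problem over $\mathbb{Z}$ with $n$-bit inputs relative to $g$, with error at most $\epsilon$ and total communication complexity at most $k\log(k/\epsilon)+C\cdot k$.
   Context: Model: parties $P_1,\dots,P_k$ each hold an integer input $x_i\in\{0,\dots,2^n-1\}$; a coordinator (distinct from the parties) wants to compute $f(x_1,\dots,x_k)$. In a one-round protocol with public randomness, a random string $r$ is shared by all parties and the coordinator; each party sends a single message depending only on its own input and $r$; the coordinator outputs a value depending only on the messages and $r$; there is no other communication. Error at most $\epsilon$ means that for every input the probability over $r$ of a wrong output is at most $\epsilon$. Total communication complexity is the maximum total number of bits sent. Sum-Equal over $\mathbb{Z}$ relative to $g$: $f=1$ if $\sum_i x_i=g$ and $f=0$ otherwise. $\log$ is base 2. *)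

theory Defs
  imports "HOL-Probability.Probability"
begin

text \<open>The public random string is drawn from a discrete
  distribution R (a pmf on nat). Party i sends the bit string msg i (x i) r,
  depending only on its identity, its own input and r.\<close>

definition valid_input :: "nat \<Rightarrow> nat \<Rightarrow> (nat \<Rightarrow> int) \<Rightarrow> bool" where
  "valid_input k n x \<longleftrightarrow> (\<forall>i<k. 0 \<le> x i \<and> x i \<le> 2 ^ n - 1)"

definition sum_equal :: "nat \<Rightarrow> int \<Rightarrow> (nat \<Rightarrow> int) \<Rightarrow> bool" where
  "sum_equal k g x \<longleftrightarrow> (\<Sum>i<k. x i) = g"

definition protocol_output ::
  "nat \<Rightarrow> (nat \<Rightarrow> int \<Rightarrow> nat \<Rightarrow> bool list) \<Rightarrow> (bool list list \<Rightarrow> nat \<Rightarrow> bool)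
    \<Rightarrow> (nat \<Rightarrow> int) \<Rightarrow> nat \<Rightarrow> bool" where
  "protocol_output k msg out x r = out (map (\<lambda>i. msg i (x i) r) [0..<k]) r"

definition total_comm ::
  "nat \<Rightarrow> (nat \<Rightarrow> int \<Rightarrow> nat \<Rightarrow> bool list) \<Rightarrow> (nat \<Rightarrow> int) \<Rightarrow> nat \<Rightarrow> nat" where
  "total_comm k msg x r = (\<Sum>i<k. length (msg i (x i) r))"

definition sum_equal_protocol ::
  "nat \<Rightarrow> nat \<Rightarrow> int \<Rightarrow> real \<Rightarrow> real \<Rightarrow> nat pmf \<Rightarrow> (nat \<Rightarrow> int \<Rightarrow> nat \<Rightarrow> bool list)
     \<Rightarrow> (bool list list \<Rightarrow> nat \<Rightarrow> bool) \<Rightarrow> bool" where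
  "sum_equal_protocol k n g eps B R msg out \<longleftrightarrow>
     (\<forall>x. valid_input k n x \<longrightarrow>
        measure_pmf.prob R {r. protocol_output k msg out x r \<noteq> sum_equal k g x} \<le> eps) \<and>
     (\<forall>x. valid_input k n x \<longrightarrow> (\<forall>r\<in>set_pmf R. real (total_comm k msg x r) \<le> B))"

end

theory Submission
  imports Defs "HOL-Computational_Algebra.Primes"
begin

text \<open>
  Let the public coin be r, uniform on [0, p) for a prime p larger than every possible
  value of |x_1 + ... + x_k - g|. Party i forms the fingerprint w_i = r y_i mod p, where
  y_i = x_i except that the first party uses x_1 - g, so that w_1 + ... + w_k is congruent
  to r (x_1 + ... + x_k - g) modulo p. It sends only the t leading bits
  c_i = floor (w_i 2^t / p) of w_i / p, and the coordinator accepts iff c_1 + ... + c_k + j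
  is divisible by 2^t for some 0 <= j < k. If the sum equals g this always happens, because
  the k rounding errors add up to less than k. Otherwise acceptance forces
  r (x_1 + ... + x_k - g) mod p to lie within k p / 2^t of a multiple of p; as r D mod p
  runs through all residues for D not divisible by p, this has probability at most
  2 k / 2^t + 2 / p. Taking 2^t >= 4 k / eps and p >= 4 / eps gives error eps with
  k t <= k log (k / eps) + 3 k bits.
\<close>

fun to_bits :: "nat \<Rightarrow> nat \<Rightarrow> bool list" where
  "to_bits 0 c = []"
| "to_bits (Suc t) c = odd c # to_bits t (c div 2)"

fun of_bits :: "bool list \<Rightarrow> nat" where
  "of_bits [] = 0"
| "of_bits (b # bs) = of_bool b + 2 * of_bits bs"

lemma length_to_bits [simp]: "length (to_bits t c) = t"
  by (induction t arbitrary: c) auto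

lemma of_bits_to_bits: "of_bits (to_bits t c) = c mod 2 ^ t"
proof (induction t arbitrary: c)
  case (Suc t)
  then show ?case by (simp add: mod_mult2_eq) presburger
qed simp

lemma sum_mult_eq_div_mod:
  fixes w :: "'a \<Rightarrow> int" and T p :: int
  assumes "finite I" "I \<noteq> {}" "0 < p"
  shows "\<exists>E. T * (\<Sum>i\<in>I. w i) = p * (\<Sum>i\<in>I. w i * T div p) + E \<and> 0 \<le> E \<and> E < int (card I) * p"
proof (intro exI conjI)
  let ?E = "\<Sum>i\<in>I. w i * T mod p"
  have "T * (\<Sum>i\<in>I. w i) = (\<Sum>i\<in>I. p * (w i * T div p) + w i * T mod p)"
    unfolding sum_distrib_left by (intro sum.cong refl) (simp add: mult.commute)
  then show "T * (\<Sum>i\<in>I. w i) = p * (\<Sum>i\<in>I. w i * T div p) + ?E"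
    by (simp only: sum.distrib sum_distrib_left)
  show "0 \<le> ?E"
    using assms by (simp add: sum_nonneg)
  have "?E < (\<Sum>i\<in>I. p)"
    using assms by (intro sum_strict_mono) auto
  then show "?E < int (card I) * p"
    by simp
qed

definition near_zero_mod :: "int \<Rightarrow> int \<Rightarrow> int \<Rightarrow> int \<Rightarrow> bool" where
  "near_zero_mod p T k v \<longleftrightarrow> T * (v mod p) < k * p \<or> T * (p - v mod p) < k * p"

lemma rounded_sum_reaches_multiple:
  fixes W C E T p k :: int
  assumes "T * W = p * C + E" "0 \<le> E" "E < k * p" "0 < p" "p dvd W"
  shows "\<exists>j\<in>{0..<k}. T dvd C + j"
proof -
  obtain m where "W = p * m"
    using \<open>p dvd W\<close> by blast
  then have "p * (T * m - C) = E"
    using assms(1) by (simp add: algebra_simps)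
  then have "p * 0 \<le> p * (T * m - C)" "p * (T * m - C) < p * k"
    using assms(2,3) by (simp_all add: mult.commute)
  then have "0 \<le> T * m - C" "T * m - C < k"
    using \<open>0 < p\<close> by (simp_all only: mult_le_cancel_left_pos mult_less_cancel_left_pos)
  then show ?thesis
    by (intro bexI[of _ "T * m - C"]) auto
qed

lemma rounded_sum_multiple_imp_near_zero_mod:
  fixes W C E T p k j :: int
  assumes decomp: "T * W = p * C + E" "0 \<le> E" "E < k * p" and "0 < p" "k \<le> T"
    and j: "T dvd C + j" "0 \<le> j" "j < k"
  shows "near_zero_mod p T k W"
proof -
  obtain q where q: "C = T * q - j"
    using j(1) by (metis add_diff_cancel_right' dvd_def)
  define v where "v = W mod p"
  define m where "m = W div p"
  define u where "u = E - p * j"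
  have "0 \<le> p * j" "p * j < k * p"
    using j(2,3) \<open>0 < p\<close> by (simp_all add: mult.commute)
  then have u: "- (k * p) < u" "u < k * p"
    using decomp(2,3) by (simp_all add: u_def)
  have "W = p * m + v"
    by (simp add: v_def m_def)
  \<comment> \<open>a multiple of \<open>p T\<close> strictly between \<open>- p T\<close> and \<open>2 p T\<close>, hence \<open>0\<close> or \<open>p T\<close>\<close>
  then have eq: "T * v - u = p * T * (q - m)"
    using decomp(1) q unfolding u_def by (simp add: algebra_simps)
  have "0 < T"
    using \<open>k \<le> T\<close> j(2,3) by linarith
  then have pT: "0 < p * T"
    using \<open>0 < p\<close> by simp
  have "0 \<le> v" "v < p"
    using \<open>0 < p\<close> by (simp_all add: v_def)
  then have "0 \<le> T * v" "T * v < p * T"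
    using \<open>0 < T\<close> by (simp_all add: mult.commute)
  moreover have "k * p \<le> p * T"
    using \<open>k \<le> T\<close> \<open>0 < p\<close> by simp
  ultimately have "p * T * (-1) < p * T * (q - m)" "p * T * (q - m) < p * T * 2"
    using eq u by linarith+
  then have "q - m = 0 \<or> q - m = 1"
    unfolding mult_less_cancel_left_pos[OF pT] by linarith
  then show ?thesis
    using eq u unfolding near_zero_mod_def v_def by (auto simp: algebra_simps)
qed

lemma card_near_zero_mod_le:
  fixes p T k :: int
  assumes "0 < p" "0 < T" "0 \<le> k"
  shows "real (card {v \<in> {0..<p}. near_zero_mod p T k v}) \<le> 2 * (real_of_int (k * p) / T + 1)"
proof -
  define M where "M = k * p div T"
  have le_M: "u \<le> M" if "T * u < k * p" for u
    unfolding M_def using that \<open>0 < T\<close> zdiv_mono1[of "T * u" "k * p" T] by simp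
  have "{v \<in> {0..<p}. near_zero_mod p T k v} \<subseteq> {0..M} \<union> (\<lambda>u. p - u) ` {0..M}"
  proof
    fix v assume "v \<in> {v \<in> {0..<p}. near_zero_mod p T k v}"
    then have "0 \<le> v" "v < p" "T * v < k * p \<or> T * (p - v) < k * p"
      by (auto simp: near_zero_mod_def)
    then have "v \<in> {0..M} \<or> p - v \<in> {0..M}"
      using le_M by auto
    then show "v \<in> {0..M} \<union> (\<lambda>u. p - u) ` {0..M}"
      by (auto intro: image_eqI[of v _ "p - v"])
  qed
  then have "card {v \<in> {0..<p}. near_zero_mod p T k v} \<le> card ({0..M} \<union> (\<lambda>u. p - u) ` {0..M})"
    by (intro card_mono) auto
  also have "\<dots> \<le> card {0..M} + card ((\<lambda>u. p - u) ` {0..M})"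
    by (rule card_Un_le)
  also have "\<dots> \<le> 2 * card {0..M}"
    using card_image_le[of "{0..M}" "\<lambda>u. p - u"] by simp
  finally have "real (card {v \<in> {0..<p}. near_zero_mod p T k v}) \<le> 2 * real (card {0..M})"
    by linarith
  also have "\<dots> \<le> 2 * (real_of_int (k * p) / T + 1)"
    using real_of_int_div4[of "k * p" T] assms by (simp add: M_def pos_imp_zdiv_nonneg_iff)
  finally show ?thesis .
qed

lemma inj_on_mult_mod:
  fixes D p :: int
  assumes "coprime D p"
  shows "inj_on (\<lambda>r. (r * D) mod p) {0..<p}"
proof
  fix a b assume a: "a \<in> {0..<p}" and b: "b \<in> {0..<p}" and "(a * D) mod p = (b * D) mod p"
  then have "p dvd (a - b) * D"
    by (simp add: mod_eq_dvd_iff left_diff_distrib)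
  then have "p dvd a - b"
    using assms by (simp add: coprime_commute coprime_dvd_mult_left_iff)
  moreover have "\<bar>a - b\<bar> < \<bar>p\<bar>"
    using a b by auto
  ultimately show "a = b"
    using dvd_imp_le_int[of "a - b" p] by fastforce
qed

lemma near_zero_mod_cong:
  "v mod p = u mod p \<Longrightarrow> near_zero_mod p T k v \<longleftrightarrow> near_zero_mod p T k u"
  by (simp add: near_zero_mod_def)

lemma prob_near_zero_mod_le:
  fixes p :: nat and D T k :: int
  assumes "coprime D (int p)" "0 < p" "0 < T" "0 \<le> k"
  shows "measure_pmf.prob (pmf_of_set {0..<p}) {r. near_zero_mod (int p) T k (int r * D)}
           \<le> 2 * k / T + 2 / p"
proof -
  define f where "f r = (int r * D) mod int p" for r
  let ?A = "{r \<in> {0..<p}. near_zero_mod (int p) T k (int r * D)}"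
  let ?B = "{v \<in> {0..<int p}. near_zero_mod (int p) T k v}"
  have "inj_on f {0..<p}"
  proof (rule inj_onI)
    fix a b assume "a \<in> {0..<p}" "b \<in> {0..<p}" "f a = f b"
    then have "int a = int b"
      using inj_on_mult_mod[OF assms(1)] by (auto simp: f_def dest: inj_onD)
    then show "a = b"
      by simp
  qed
  moreover have "f ` ?A \<subseteq> ?B"
    using \<open>0 < p\<close> by (auto simp: f_def near_zero_mod_cong[OF mod_mod_trivial])
  moreover have "finite ?B"
    by (rule finite_subset[of _ "{0..<int p}"]) auto
  ultimately have "card ?A \<le> card ?B"
    by (intro card_inj_on_le[of f]) (auto intro: inj_on_subset)
  then have card_A: "real (card ?A) \<le> 2 * (real_of_int (k * int p) / T + 1)"
    using card_near_zero_mod_le[of "int p" T k] assms by linarith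
  have "measure_pmf.prob (pmf_of_set {0..<p}) {r. near_zero_mod (int p) T k (int r * D)}
                   = real (card ?A) / p"
    using \<open>0 < p\<close> by (subst measure_pmf_of_set) (auto intro: arg_cong[where f = card])
  also have "\<dots> \<le> 2 * (real_of_int (k * int p) / T + 1) / p"
    using card_A by (rule divide_right_mono) simp
  also have "\<dots> = 2 * k / T + 2 / p"
    using \<open>0 < p\<close> by (simp add: field_simps)
  finally show ?thesis .
qed

definition fingerprint :: "int \<Rightarrow> nat \<Rightarrow> nat \<Rightarrow> nat \<Rightarrow> int \<Rightarrow> int" where
  "fingerprint g p r i v = (int r * (if i = 0 then v - g else v)) mod int p"

definition sum_equal_msg :: "int \<Rightarrow> nat \<Rightarrow> nat \<Rightarrow> nat \<Rightarrow> int \<Rightarrow> nat \<Rightarrow> bool list" where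
  "sum_equal_msg g p t i v r = to_bits t (nat (fingerprint g p r i v * 2 ^ t div int p))"

definition sum_equal_out :: "nat \<Rightarrow> nat \<Rightarrow> bool list list \<Rightarrow> nat \<Rightarrow> bool" where
  "sum_equal_out k t ms r \<longleftrightarrow> (\<exists>j\<in>{0..<int k}. 2 ^ t dvd int (sum_list (map of_bits ms)) + j)"

lemma of_bits_sum_equal_msg:
  assumes "0 < p"
  shows "int (of_bits (sum_equal_msg g p t i v r)) = fingerprint g p r i v * 2 ^ t div int p"
proof -
  let ?w = "fingerprint g p r i v"
  have "0 \<le> ?w" "?w < int p"
    using assms by (simp_all add: fingerprint_def)
  have "?w * 2 ^ t div int p * int p \<le> ?w * 2 ^ t"
    using assms by (simp add: minus_mod_eq_div_mult[symmetric])
  also have "\<dots> < 2 ^ t * int p"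
    using \<open>?w < int p\<close> by simp
  finally have "?w * 2 ^ t div int p < 2 ^ t"
    using assms by simp
  moreover have "0 \<le> ?w * 2 ^ t div int p"
    using assms \<open>0 \<le> ?w\<close> by (simp add: pos_imp_zdiv_nonneg_iff)
  ultimately show ?thesis
    by (simp add: sum_equal_msg_def of_bits_to_bits nat_less_iff)
qed

lemma total_comm_sum_equal_msg: "total_comm k (sum_equal_msg g p t) x r = k * t"
  by (simp add: total_comm_def sum_equal_msg_def)

lemma protocol_output_sum_equal:
  assumes "0 < p"
  shows "protocol_output k (sum_equal_msg g p t) (sum_equal_out k t) x r \<longleftrightarrow>
    (\<exists>j\<in>{0..<int k}. 2 ^ t dvd (\<Sum>i<k. fingerprint g p r i (x i) * 2 ^ t div int p) + j)"
proof -
  have "int (sum_list (map of_bits (map (\<lambda>i. sum_equal_msg g p t i (x i) r) [0..<k])))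
          = (\<Sum>i<k. fingerprint g p r i (x i) * 2 ^ t div int p)"
    using assms by (simp add: sum_list_sum_nth atLeast0LessThan of_bits_sum_equal_msg)
  then show ?thesis
    by (simp add: protocol_output_def sum_equal_out_def)
qed

lemma sum_fingerprint_mod:
  assumes "0 < k"
  shows "(\<Sum>i<k. fingerprint g p r i (x i)) mod int p = (int r * ((\<Sum>i<k. x i) - g)) mod int p"
proof -
  have "(\<Sum>i<k. (if i = 0 then x i - g else x i)) = (\<Sum>i<k. x i - (if i = 0 then g else 0))"
    by (intro sum.cong) auto
  also have "\<dots> = (\<Sum>i<k. x i) - g"
    using assms by (simp add: sum_subtractf)
  finally have "(\<Sum>i<k. (if i = 0 then x i - g else x i)) = (\<Sum>i<k. x i) - g" .
  then show ?thesis
    unfolding fingerprint_def by (metis (no_types) mod_sum_eq sum_distrib_left)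
qed

lemma sum_equal_protocol_accepts:
  assumes "0 < k" "0 < p" "sum_equal k g x"
  shows "protocol_output k (sum_equal_msg g p t) (sum_equal_out k t) x r"
proof -
  let ?w = "\<lambda>i. fingerprint g p r i (x i)"
  obtain E where "2 ^ t * (\<Sum>i<k. ?w i) = int p * (\<Sum>i<k. ?w i * 2 ^ t div int p) + E"
    "0 \<le> E" "E < int k * int p"
    using sum_mult_eq_div_mod[where I = "{..<k}" and w = ?w and T = "2 ^ t" and p = "int p"] assms by auto
  moreover have "int p dvd (\<Sum>i<k. ?w i)"
    using sum_fingerprint_mod[of k g p r x] assms by (simp add: sum_equal_def mod_eq_0_iff_dvd)
  ultimately show ?thesis
    using rounded_sum_reaches_multiple assms by (simp add: protocol_output_sum_equal)
qed

lemma sum_equal_protocol_accept_imp_near_zero_mod: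
  assumes "0 < k" "0 < p" "int k \<le> 2 ^ t"
    and "protocol_output k (sum_equal_msg g p t) (sum_equal_out k t) x r"
  shows "near_zero_mod (int p) (2 ^ t) k (int r * ((\<Sum>i<k. x i) - g))"
proof -
  let ?w = "\<lambda>i. fingerprint g p r i (x i)"
  obtain E where "2 ^ t * (\<Sum>i<k. ?w i) = int p * (\<Sum>i<k. ?w i * 2 ^ t div int p) + E"
    "0 \<le> E" "E < int k * int p"
    using sum_mult_eq_div_mod[where I = "{..<k}" and w = ?w and T = "2 ^ t" and p = "int p"] assms by auto
  moreover obtain j where "j \<in> {0..<int k}" "2 ^ t dvd (\<Sum>i<k. ?w i * 2 ^ t div int p) + j"
    using assms by (auto simp: protocol_output_sum_equal)
  ultimately have "near_zero_mod (int p) (2 ^ t) k (\<Sum>i<k. ?w i)"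
    using rounded_sum_multiple_imp_near_zero_mod assms by simp
  then show ?thesis
    using near_zero_mod_cong[OF sum_fingerprint_mod[OF \<open>0 < k\<close>]] by blast
qed

lemma sum_equal_protocol_error_le:
  assumes "0 < k" "prime p" "int k \<le> 2 ^ t" "int k * 2 ^ n + \<bar>g\<bar> < int p"
    and "valid_input k n x"
  shows "measure_pmf.prob (pmf_of_set {0..<p})
           {r. protocol_output k (sum_equal_msg g p t) (sum_equal_out k t) x r \<noteq> sum_equal k g x}
         \<le> 2 * real k / 2 ^ t + 2 / p"
proof (cases "sum_equal k g x")
  case True
  then show ?thesis
    using assms sum_equal_protocol_accepts[of k p g x] prime_gt_0_nat by simp
next
  case False
  define D where "D = (\<Sum>i<k. x i) - g"
  have "0 \<le> (\<Sum>i<k. x i)"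
    using \<open>valid_input k n x\<close> by (auto simp: valid_input_def intro!: sum_nonneg)
  moreover have "(\<Sum>i<k. x i) \<le> (\<Sum>i<k. 2 ^ n)"
    using \<open>valid_input k n x\<close> by (intro sum_mono) (auto simp: valid_input_def)
  ultimately have "\<bar>D\<bar> < int p"
    using assms(4) by (simp add: D_def)
  moreover have "D \<noteq> 0"
    using False by (simp add: D_def sum_equal_def)
  ultimately have "\<not> int p dvd D"
    using dvd_imp_le_int[of D "int p"] by auto
  then have "coprime D (int p)"
    using \<open>prime p\<close> prime_imp_coprime[of "int p" D] by (simp add: ac_simps)
  have "{r. protocol_output k (sum_equal_msg g p t) (sum_equal_out k t) x r \<noteq> sum_equal k g x}
          \<subseteq> {r. near_zero_mod (int p) (2 ^ t) k (int r * D)}"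
    using False sum_equal_protocol_accept_imp_near_zero_mod[of k p t g x] assms prime_gt_0_nat
    by (auto simp: D_def)
  then have "measure_pmf.prob (pmf_of_set {0..<p})
           {r. protocol_output k (sum_equal_msg g p t) (sum_equal_out k t) x r \<noteq> sum_equal k g x}
         \<le> measure_pmf.prob (pmf_of_set {0..<p}) {r. near_zero_mod (int p) (2 ^ t) k (int r * D)}"
    by (rule measure_pmf.finite_measure_mono) simp
  also have "\<dots> \<le> 2 * real k / 2 ^ t + 2 / p"
    using prob_near_zero_mod_le[OF \<open>coprime D (int p)\<close>, of "2 ^ t" k] assms prime_gt_0_nat
    by simp
  finally show ?thesis .
qed

lemma two_power_ceiling_log2:
  fixes y :: real
  assumes "1 \<le> y"
  shows "y \<le> 2 ^ nat \<lceil>log 2 y\<rceil>" "real (nat \<lceil>log 2 y\<rceil>) \<le> log 2 y + 1"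
proof -
  have "0 \<le> log 2 y"
    using assms by simp
  then have t: "real (nat \<lceil>log 2 y\<rceil>) = of_int \<lceil>log 2 y\<rceil>"
    by simp
  have "y = 2 powr log 2 y"
    using assms by simp
  also have "\<dots> \<le> 2 powr real (nat \<lceil>log 2 y\<rceil>)"
    unfolding t by simp
  finally show "y \<le> 2 ^ nat \<lceil>log 2 y\<rceil>"
    by (simp add: powr_realpow)
  show "real (nat \<lceil>log 2 y\<rceil>) \<le> log 2 y + 1"
    unfolding t by linarith
qed

lemma sum_equal_protocol_exists:
  assumes "0 < k" "0 < eps" "eps < 1"
  shows "\<exists>R msg out. sum_equal_protocol k n g eps (real k * log 2 (real k / eps) + 3 * real k) R msg out"
proof -
  define t where "t = nat \<lceil>log 2 (4 * k / eps)\<rceil>"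
  obtain p where p: "prime p" "nat (int k * 2 ^ n + \<bar>g\<bar>) + nat \<lceil>4 / eps\<rceil> < p"
    using bigger_prime by blast
  have "real k \<le> 4 * k / eps"
    using assms by (simp add: le_divide_eq)
  then have "1 \<le> 4 * k / eps"
    using assms by linarith
  then have T: "4 * k / eps \<le> 2 ^ t" and t: "real t \<le> log 2 (4 * k / eps) + 1"
    unfolding t_def by (rule two_power_ceiling_log2)+
  have "real k \<le> 2 ^ t"
    using \<open>real k \<le> 4 * k / eps\<close> T by linarith
  then have "int k \<le> 2 ^ t"
    by (metis of_int_le_iff of_int_of_nat_eq of_int_numeral of_int_power)
  have "4 / eps \<le> real p"
    using p(2) real_nat_ceiling_ge[of "4 / eps"] by linarith
  then have "2 / p \<le> eps / 2"
    using assms prime_gt_0_nat[OF p(1)] by (simp add: field_simps)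
  moreover have "2 * real k / 2 ^ t \<le> eps / 2"
    using T assms by (simp add: field_simps)
  moreover have p_large: "int k * 2 ^ n + \<bar>g\<bar> < int p"
    using p(2) by linarith
  ultimately have err: "measure_pmf.prob (pmf_of_set {0..<p})
           {r. protocol_output k (sum_equal_msg g p t) (sum_equal_out k t) x r \<noteq> sum_equal k g x}
         \<le> eps" if "valid_input k n x" for x
    using sum_equal_protocol_error_le[OF \<open>0 < k\<close> p(1) \<open>int k \<le> 2 ^ t\<close> p_large that] by linarith
  have "log 2 (4 :: real) = 2"
    using log_pow_cancel[of "2 :: real" 2] by simp
  moreover have "log 2 (4 * k / eps) = log 2 4 + log 2 (real k / eps)"
    using assms log_mult[of 2 4 "real k / eps"] by simp
  ultimately have "log 2 (4 * k / eps) = 2 + log 2 (real k / eps)"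
    by simp
  then have "real (k * t) \<le> real k * log 2 (real k / eps) + 3 * real k"
    using t assms mult_left_mono[OF t, of "real k"] by (simp add: algebra_simps)
  then have "sum_equal_protocol k n g eps (real k * log 2 (real k / eps) + 3 * real k)
      (pmf_of_set {0..<p}) (sum_equal_msg g p t) (sum_equal_out k t)"
    using err by (simp add: sum_equal_protocol_def total_comm_sum_equal_msg)
  then show ?thesis
    by blast
qed

theorem mainTheorem11:
  shows "\<exists>C::real. \<forall>(k::nat) (n::nat) (eps::real) (g::int).
           0 < k \<longrightarrow> 0 < n \<longrightarrow> 0 < eps \<longrightarrow> eps < 1 \<longrightarrow>
           (\<exists>R msg out. sum_equal_protocol k n g eps
                (real k * log 2 (real k / eps) + C * real k) R msg out)"
  using sum_equal_protocol_exists by blast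

end
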